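(* Let $n,l_1,u_1,l_2,u_2$ be non-negative integers and $(f(k))$, $(g(k))$ complex sequences such that the polynomial identity \[ \sum_{k=l_1}^{u_1}f(k)t^k(1-t)^{n-k}=\sum_{k=l_2}^{u_2}g(k)t^k \] holds for all complex $t$. Let $r,s\in\mathbb{C}\setminus\mathbb{Z}^{-}$ with $s\neq0$ and $r-s\notin\mathbb{Z}^{-}$. Then \[ \sum_{k=l_1}^{u_1}\frac{f(k)}{(k+s)\binom{n+r}{k+s}}=\sum_{k=l_2}^{u_2}\frac{g(k)}{(k+s)\binom{k+r}{k+s}}, \] and \[ \sum_{k=l_1}^{u_1}f(k)\frac{H_{n-k+r-s}-H_{n+r}}{(k+s)\binom{n+r}{k+s}}=\sum_{k=l_2}^{u_2}g(k)\frac{H_{r-s}-H_{k+r}}{(k+s)\binom{k+r}{k+s}}. \]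
   Context: $\mathbb{Z}^{-}$ denotes the set of negative integers. For complex $z$ not a negative integer, $H_z=\psi(z+1)+\gamma$ ($\psi$ the digamma function, $\gamma$ Euler's constant). Binomial coefficients with complex entries: $\binom{x}{y}=\frac{\Gamma(x+1)}{\Gamma(y+1)\Gamma(x-y+1)}$. *)

theory Defs
  imports "HOL-Analysis.Analysis"
begin

definition neg_ints :: "complex set" where
  "neg_ints = {of_int k | k. k < 0}"

definition harm :: "complex \<Rightarrow> complex" where
  "harm z = Digamma (z + 1) + of_real euler_mascheroni"

text \<open>Complex binomial coefficient Gamma(x+1)/(Gamma(y+1) Gamma(x-y+1)),
  with 1/Gamma read as the entire function rGamma (zero at the poles of Gamma).\<close>
definition cbinom :: "complex \<Rightarrow> complex \<Rightarrow> complex" where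
  "cbinom x y = Gamma (x + 1) * rGamma (y + 1) * rGamma (x - y + 1)"

end

(*
  Both sides are values of one linear functional on polynomials.  If an array V(a,b) satisfies
  the Pascal recurrence V(a,b) = V(a,b+1) + V(a+1,b), then the functional sending t^i to V(i,0)
  sends t^a (1-t)^b to V(a,b), since t^a (1-t)^(b+1) = t^a (1-t)^b - t^(a+1) (1-t)^b.  The
  hypothesis is an identity of polynomials (f(k) = 0 for k > n, otherwise the left side would
  have a pole at t = 1), so it yields  sum f(k) V(k,n-k) = sum g(k) V(k,0).
  Take V(a,b) = B(a+s, b+r-s+1), formally the integral of t^(a+s-1) (1-t)^(b+r-s) over [0,1]:
  it equals 1/((a+s) binom(a+b+r, a+s)) and gives the first identity.  Its derivative in the
  second argument, B(x,y) (psi(y) - psi(x+y)), obeys the same recurrence and gives the second.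
*)
theory Submission
  imports Defs "HOL-Computational_Algebra.Polynomial"
begin

definition moment_functional :: "(nat \<Rightarrow> 'a::comm_ring_1) \<Rightarrow> 'a poly \<Rightarrow> 'a" where
  "moment_functional m p = (\<Sum>i\<le>degree p. coeff p i * m i)"

lemma moment_functional_altdef:
  assumes "degree p \<le> N"
  shows "moment_functional m p = (\<Sum>i\<le>N. coeff p i * m i)"
  unfolding moment_functional_def
  using assms by (intro sum.mono_neutral_left) (auto simp: coeff_eq_0)

lemma moment_functional_zero [simp]: "moment_functional m 0 = 0"
  by (simp add: moment_functional_def)

lemma moment_functional_add:
  "moment_functional m (p + q) = moment_functional m p + moment_functional m q"
proof -
  define N where "N = max (degree p) (degree q)"
  have "degree (p + q) \<le> N" by (simp add: N_def degree_add_le)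
  then show ?thesis
    by (simp add: moment_functional_altdef[of _ N] N_def algebra_simps sum.distrib)
qed

lemma moment_functional_smult:
  "moment_functional m (smult c p) = c * moment_functional m p"
  by (simp add: moment_functional_altdef[of _ "degree p"] degree_smult_le
      sum_distrib_left mult.assoc)

lemma moment_functional_diff:
  "moment_functional m (p - q) = moment_functional m p - moment_functional m q"
  using moment_functional_add[of m "p - q" q] by simp

lemma moment_functional_sum:
  "moment_functional m (\<Sum>k\<in>A. F k) = (\<Sum>k\<in>A. moment_functional m (F k))"
  by (induction A rule: infinite_finite_induct)
     (simp_all add: moment_functional_add)

lemma moment_functional_monom: "moment_functional m (monom 1 a) = m a"
proof -
  have "moment_functional m (monom 1 a) = (\<Sum>i\<le>a. (if a = i then 1 else 0) * m i)"
    by (simp add: moment_functional_altdef[of _ a] degree_monom_le)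
  also have "\<dots> = (\<Sum>i\<le>a. if a = i then m i else 0)"
    by (rule sum.cong) auto
  finally show ?thesis by simp
qed

lemma monom_mult_one_minus_power_Suc:
  "(monom 1 a :: 'a::comm_ring_1 poly) * [:1, -1:] ^ Suc b
     = monom 1 a * [:1, -1:] ^ b - monom 1 (Suc a) * [:1, -1:] ^ b"
proof -
  \<comment> \<open>An opaque name for the variable keeps simp from rewriting products into pCons form.\<close>
  define X :: "'a poly" where "X = [:0, 1:]"
  have "monom 1 (Suc a) = monom 1 a * X"
    using mult_monom[of 1 a 1 1] by (simp add: X_def monom_altdef power_Suc2)
  moreover have "[:1, -1:] = 1 - X"
    by (simp add: X_def one_pCons)
  ultimately show ?thesis
    by (simp only:) (simp add: algebra_simps)
qed

lemma moment_functional_monom_mult_one_minus_power: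
  fixes V :: "nat \<Rightarrow> nat \<Rightarrow> 'a::comm_ring_1"
  assumes pascal: "\<And>a b. V a b = V a (Suc b) + V (Suc a) b"
  shows "moment_functional (\<lambda>i. V i 0) (monom 1 a * [:1, -1:] ^ b) = V a b"
proof (induction b arbitrary: a)
  case 0
  show ?case by (simp add: moment_functional_monom)
next
  case (Suc b)
  show ?case
    using pascal[of a b]
    by (simp only: monom_mult_one_minus_power_Suc moment_functional_diff Suc.IH) simp
qed

lemma pascal_transfer:
  fixes V :: "nat \<Rightarrow> nat \<Rightarrow> 'a::comm_ring_1"
  assumes pascal: "\<And>a b. V a b = V a (Suc b) + V (Suc a) b"
    and eq: "(\<Sum>k\<in>A. smult (f k) (monom 1 k * [:1, -1:] ^ e k))
             = (\<Sum>k\<in>B. smult (g k) (monom 1 k))"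
  shows "(\<Sum>k\<in>A. f k * V k (e k)) = (\<Sum>k\<in>B. g k * V k 0)"
  using arg_cong[OF eq, of "moment_functional (\<lambda>i. V i 0)"]
  by (simp add: moment_functional_sum moment_functional_smult moment_functional_monom
      moment_functional_monom_mult_one_minus_power[where V = V, OF pascal])

lemma poly_eq_if_eq_except_point:
  fixes p q :: "'a::{idom,ring_char_0} poly"
  assumes "\<And>t. t \<noteq> c \<Longrightarrow> poly p t = poly q t"
  shows "p = q"
proof (rule ccontr)
  assume "p \<noteq> q"
  then have "finite {t. poly (p - q) t = 0}"
    by (intro poly_roots_finite) simp
  moreover have "- {c} \<subseteq> {t. poly (p - q) t = 0}"
    using assms by auto
  moreover have "infinite (- {c})"
    by (simp add: infinite_UNIV_char_0 Compl_eq_Diff_UNIV)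
  ultimately show False
    using finite_subset by blast
qed

lemma powi_identity_coeffs_vanish:
  fixes f g :: "nat \<Rightarrow> 'a::field_char_0"
  assumes eq: "\<And>t. (\<Sum>k\<in>A. f k * t ^ k * (1 - t) powi (int n - int k))
                  = (\<Sum>k\<in>B. g k * t ^ k)"
    and A: "finite A" and k: "k \<in> A" "n < k"
  shows "f k = 0"
proof (rule ccontr)
  assume "f k \<noteq> 0"
  define K where "K = Max {j \<in> A. f j \<noteq> 0}"
  have le_K: "j \<le> K" if "j \<in> A" "f j \<noteq> 0" for j
    unfolding K_def using A that by (intro Max_ge) auto
  have K: "K \<in> A" "f K \<noteq> 0"
    unfolding K_def using A k \<open>f k \<noteq> 0\<close> Max_in[of "{j \<in> A. f j \<noteq> 0}"] by auto
  have "n < K" using le_K[OF k(1) \<open>f k \<noteq> 0\<close>] k(2) by simp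
  define P where "P = (\<Sum>j\<in>A. smult (f j) (monom 1 j * [:1, -1:] ^ (K - j)))"
  define Q where "Q = (\<Sum>j\<in>B. smult (g j) (monom 1 j))"
  \<comment> \<open>Multiplying by \<open>(1 - t)^(K - n)\<close> clears the negative powers; at \<open>t = 1\<close> only the
    term of index \<open>K\<close> survives.\<close>
  have "P = [:1, -1:] ^ (K - n) * Q"
  proof (rule poly_eq_if_eq_except_point)
    fix t :: 'a assume "t \<noteq> 1"
    have summand: "poly (smult (f j) (monom 1 j * [:1, -1:] ^ (K - j))) t
        = (1 - t) ^ (K - n) * (f j * t ^ j * (1 - t) powi (int n - int j))" if "j \<in> A" for j
    proof (cases "f j = 0")
      case False
      then have "j \<le> K" using le_K that by blast
      then have "(1 - t) ^ (K - j) = (1 - t) powi (int (K - n) + (int n - int j))"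
        using \<open>n < K\<close> by (simp flip: power_int_of_nat)
      also have "\<dots> = (1 - t) ^ (K - n) * (1 - t) powi (int n - int j)"
        using \<open>t \<noteq> 1\<close> by (simp add: power_int_add)
      finally show ?thesis by (simp add: poly_monom algebra_simps)
    qed simp
    have "poly P t = (1 - t) ^ (K - n) * (\<Sum>j\<in>A. f j * t ^ j * (1 - t) powi (int n - int j))"
      unfolding P_def poly_sum sum_distrib_left by (rule sum.cong[OF refl summand])
    also have "\<dots> = poly ([:1, -1:] ^ (K - n) * Q) t"
      by (simp add: eq Q_def poly_sum poly_monom)
    finally show "poly P t = poly ([:1, -1:] ^ (K - n) * Q) t" .
  qed
  then have "poly P 1 = 0"
    using \<open>n < K\<close> by simp
  moreover have "poly P 1 = f K"
  proof -
    have "poly P 1 = (\<Sum>j\<in>A. if j = K then f K else 0)"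
      unfolding P_def poly_sum
      by (intro sum.cong refl) (use le_K in \<open>fastforce simp: poly_monom\<close>)
    then show ?thesis using A K(1) by simp
  qed
  ultimately show False using K(2) by simp
qed

lemma powi_identity_imp_poly_eq:
  fixes f g :: "nat \<Rightarrow> 'a::field_char_0"
  assumes eq: "\<And>t. (\<Sum>k\<in>A. f k * t ^ k * (1 - t) powi (int n - int k))
                  = (\<Sum>k\<in>B. g k * t ^ k)"
    and A: "finite A"
  shows "(\<Sum>k\<in>A. smult (f k) (monom 1 k * [:1, -1:] ^ (n - k)))
           = (\<Sum>k\<in>B. smult (g k) (monom 1 k))"
proof (rule poly_eq_poly_eq_iff[THEN iffD1, OF ext])
  fix t :: 'a
  have summand: "poly (smult (f k) (monom 1 k * [:1, -1:] ^ (n - k))) t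
      = f k * t ^ k * (1 - t) powi (int n - int k)" if "k \<in> A" for k
  proof (cases "k \<le> n")
    case False
    then show ?thesis using powi_identity_coeffs_vanish[OF eq A that] by simp
  qed (simp add: poly_monom mult.assoc flip: power_int_of_nat)
  have "poly (\<Sum>k\<in>A. smult (f k) (monom 1 k * [:1, -1:] ^ (n - k))) t
      = (\<Sum>k\<in>A. f k * t ^ k * (1 - t) powi (int n - int k))"
    unfolding poly_sum by (rule sum.cong[OF refl summand])
  also have "\<dots> = poly (\<Sum>k\<in>B. smult (g k) (monom 1 k)) t"
    by (simp add: eq poly_sum poly_monom)
  finally show "poly (\<Sum>k\<in>A. smult (f k) (monom 1 k * [:1, -1:] ^ (n - k))) t
      = poly (\<Sum>k\<in>B. smult (g k) (monom 1 k)) t" .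
qed

lemma powi_identity_pascal_transfer:
  fixes f g :: "nat \<Rightarrow> 'a::field_char_0" and V :: "nat \<Rightarrow> nat \<Rightarrow> 'a"
  assumes eq: "\<And>t. (\<Sum>k\<in>A. f k * t ^ k * (1 - t) powi (int n - int k))
                  = (\<Sum>k\<in>B. g k * t ^ k)"
    and A: "finite A"
    and pascal: "\<And>a b. V a b = V a (Suc b) + V (Suc a) b"
    and W: "\<And>k. k \<le> n \<Longrightarrow> W k = V k (n - k)"
  shows "(\<Sum>k\<in>A. f k * W k) = (\<Sum>k\<in>B. g k * V k 0)"
proof -
  have "f k * W k = f k * V k (n - k)" if "k \<in> A" for k
    using W powi_identity_coeffs_vanish[OF eq A that] by (cases "k \<le> n") auto
  then have "(\<Sum>k\<in>A. f k * W k) = (\<Sum>k\<in>A. f k * V k (n - k))"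
    by (rule sum.cong[OF refl])
  also have "\<dots> = (\<Sum>k\<in>B. g k * V k 0)"
    by (rule pascal_transfer[where V = V, OF pascal powi_identity_imp_poly_eq[OF eq A]])
  finally show ?thesis .
qed

lemma Beta_eq_inverse_cbinom: "Beta x y = 1 / (x * cbinom (x + y - 1) x)"
proof -
  have "x * cbinom (x + y - 1) x = Gamma (x + y) * rGamma x * rGamma y"
    using rGamma_plus1[of x] by (simp add: cbinom_def algebra_simps)
  then show ?thesis
    by (simp add: Beta_altdef divide_inverse
        flip: rGamma_inverse_Gamma Gamma_def)
qed

lemma Beta_Digamma_plus1_plus1:
  fixes x y :: "'a::Gamma"
  assumes x: "x \<notin> \<int>\<^sub>\<le>\<^sub>0" and y: "y \<notin> \<int>\<^sub>\<le>\<^sub>0" and xy: "x + y \<noteq> 0"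
  shows "Beta (x + 1) y * (Digamma y - Digamma (x + y + 1))
           + Beta x (y + 1) * (Digamma (y + 1) - Digamma (x + y + 1))
         = Beta x y * (Digamma y - Digamma (x + y))"
proof -
  have "y \<noteq> 0" using y by auto
  have B1: "Beta (x + 1) y = x / (x + y) * Beta x y"
    using Beta_plus1_left[OF x, of y] xy by (simp add: field_simps)
  have B2: "Beta x (y + 1) = y / (x + y) * Beta x y"
    using Beta_plus1_right[OF y, of x] xy by (simp add: field_simps)
  have D1: "Digamma (y + 1) = Digamma y + 1 / y"
    using Digamma_plus1[OF \<open>y \<noteq> 0\<close>] .
  have D2: "Digamma (x + y + 1) = Digamma (x + y) + 1 / (x + y)"
    using Digamma_plus1[OF xy] .
  obtain S where S: "x + y = S" by blast
  then have "x = S - y" "S \<noteq> 0" using xy by auto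
  show ?thesis
    unfolding B1 B2 D1 D2 unfolding S using \<open>y \<noteq> 0\<close> \<open>S \<noteq> 0\<close>
    by (simp add: \<open>x = S - y\<close> field_simps)
qed

lemma of_nat_add_notin_nonpos_Ints:
  fixes z :: "'a::ring_1"
  assumes "z \<notin> \<int>\<^sub>\<le>\<^sub>0"
  shows "of_nat a + z \<notin> \<int>\<^sub>\<le>\<^sub>0"
  using nonpos_Ints_diff_Nats[of "of_nat a + z" "of_nat a"] assms by auto

lemma Beta_shift_pascal:
  fixes p q :: "'a::Gamma"
  assumes "p \<notin> \<int>\<^sub>\<le>\<^sub>0" "q \<notin> \<int>\<^sub>\<le>\<^sub>0"
  shows "Beta (of_nat a + p) (of_nat b + q)
       = Beta (of_nat a + p) (of_nat (Suc b) + q) + Beta (of_nat (Suc a) + p) (of_nat b + q)"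
  using Beta_plus1_plus1[OF assms[THEN of_nat_add_notin_nonpos_Ints]]
  by (simp add: algebra_simps)

lemma Beta_Digamma_shift_pascal:
  fixes p q :: "'a::Gamma"
  assumes "p \<notin> \<int>\<^sub>\<le>\<^sub>0" "q \<notin> \<int>\<^sub>\<le>\<^sub>0" "p + q \<notin> \<int>\<^sub>\<le>\<^sub>0"
  defines "D \<equiv> \<lambda>a b. Beta (of_nat a + p) (of_nat b + q)
                   * (Digamma (of_nat b + q) - Digamma (of_nat (a + b) + (p + q)))"
  shows "D a b = D a (Suc b) + D (Suc a) b"
proof -
  have "of_nat (a + b) + (p + q) \<noteq> 0"
    using of_nat_add_notin_nonpos_Ints[OF assms(3), of "a + b"] by (metis zero_in_nonpos_Ints)
  then show ?thesis
    using Beta_Digamma_plus1_plus1[OF assms(1,2)[THEN of_nat_add_notin_nonpos_Ints], of a b]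
    by (simp add: D_def algebra_simps)
qed

lemma nonpos_Ints_eq_insert_neg_ints: "\<int>\<^sub>\<le>\<^sub>0 = insert 0 neg_ints"
  by (auto simp: neg_ints_def nonpos_Ints_def)

lemma neg_ints_iff_plus_one_nonpos_Ints: "z \<in> neg_ints \<longleftrightarrow> z + 1 \<in> \<int>\<^sub>\<le>\<^sub>0"
proof
  assume "z \<in> neg_ints"
  then obtain k where "z = of_int k" "k < 0"
    by (auto simp: neg_ints_def)
  then have "z + 1 = of_int (k + 1)" "k + 1 \<le> 0" by simp_all
  then show "z + 1 \<in> \<int>\<^sub>\<le>\<^sub>0"
    by (metis nonpos_Ints_of_int)
next
  assume "z + 1 \<in> \<int>\<^sub>\<le>\<^sub>0"
  then obtain m where "z + 1 = of_int m" "m \<le> 0"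
    by (auto simp: nonpos_Ints_def)
  then have "z = of_int (m - 1) \<and> m - 1 < 0" by (simp add: algebra_simps)
  then show "z \<in> neg_ints"
    unfolding neg_ints_def by blast
qed

theorem lemma6:
  fixes n l1 u1 l2 u2 :: nat and f g :: "nat \<Rightarrow> complex" and r s :: complex
  assumes poly_id: "\<forall>t::complex.
      (\<Sum>k=l1..u1. f k * t ^ k * (1 - t) powi (int n - int k))
    = (\<Sum>k=l2..u2. g k * t ^ k)"
    and r: "r \<notin> neg_ints" and s: "s \<notin> neg_ints" and s0: "s \<noteq> 0"
    and rs: "r - s \<notin> neg_ints"
  shows "(\<Sum>k=l1..u1. f k / ((of_nat k + s) * cbinom (of_nat n + r) (of_nat k + s)))
       = (\<Sum>k=l2..u2. g k / ((of_nat k + s) * cbinom (of_nat k + r) (of_nat k + s)))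
   \<and> (\<Sum>k=l1..u1. f k * (harm (of_nat n - of_nat k + r - s) - harm (of_nat n + r))
                      / ((of_nat k + s) * cbinom (of_nat n + r) (of_nat k + s)))
       = (\<Sum>k=l2..u2. g k * (harm (r - s) - harm (of_nat k + r))
                      / ((of_nat k + s) * cbinom (of_nat k + r) (of_nat k + s)))"
proof -
  define q where "q = r - s + 1"
  have s': "s \<notin> \<int>\<^sub>\<le>\<^sub>0"
    using s s0 by (simp add: nonpos_Ints_eq_insert_neg_ints)
  have q: "q \<notin> \<int>\<^sub>\<le>\<^sub>0" and sq: "s + q \<notin> \<int>\<^sub>\<le>\<^sub>0"
    using rs r by (simp_all add: q_def neg_ints_iff_plus_one_nonpos_Ints)
  define B where "B a b = Beta (of_nat a + s) (of_nat b + q)" for a b :: nat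
  define D where "D a b = B a b * (Digamma (of_nat b + q) - Digamma (of_nat (a + b) + (s + q)))"
    for a b :: nat
  have B_cbinom: "B k (m - k) = 1 / ((of_nat k + s) * cbinom (of_nat m + r) (of_nat k + s))"
    and D_harm: "D k (m - k)
       = B k (m - k) * (harm (of_nat m - of_nat k + r - s) - harm (of_nat m + r))"
    if "k \<le> m" for k m
  proof -
    have "of_nat k + s + (of_nat (m - k) + q) - 1 = of_nat m + r"
      using that by (simp add: q_def)
    then show "B k (m - k) = 1 / ((of_nat k + s) * cbinom (of_nat m + r) (of_nat k + s))"
      by (simp add: B_def Beta_eq_inverse_cbinom)
    show "D k (m - k) = B k (m - k) * (harm (of_nat m - of_nat k + r - s) - harm (of_nat m + r))"
      using that by (simp add: D_def harm_def q_def algebra_simps)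
  qed
  have B_pascal: "B a b = B a (Suc b) + B (Suc a) b" for a b
    unfolding B_def by (rule Beta_shift_pascal[OF s' q])
  have D_pascal: "D a b = D a (Suc b) + D (Suc a) b" for a b
    unfolding D_def B_def by (rule Beta_Digamma_shift_pascal[OF s' q sq])
  have rhs: "B k 0 = 1 / ((of_nat k + s) * cbinom (of_nat k + r) (of_nat k + s))"
    "D k 0 = B k 0 * (harm (r - s) - harm (of_nat k + r))" for k
    using B_cbinom[of k k] D_harm[of k k] by simp_all
  have "(\<Sum>k=l1..u1. f k * (1 / ((of_nat k + s) * cbinom (of_nat n + r) (of_nat k + s))))
      = (\<Sum>k=l2..u2. g k * B k 0)"
    by (rule powi_identity_pascal_transfer[where V = B,
          OF poly_id[rule_format] finite_atLeastAtMost B_pascal])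
       (simp add: B_cbinom)
  moreover have "(\<Sum>k=l1..u1. f k * ((harm (of_nat n - of_nat k + r - s) - harm (of_nat n + r))
                      / ((of_nat k + s) * cbinom (of_nat n + r) (of_nat k + s))))
      = (\<Sum>k=l2..u2. g k * D k 0)"
    by (rule powi_identity_pascal_transfer[where V = D,
          OF poly_id[rule_format] finite_atLeastAtMost D_pascal])
       (simp add: D_harm B_cbinom)
  ultimately show ?thesis
    by (simp add: rhs)
qed

end
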